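(* Let $\epsilon\in\{1,-1\}$ and $j\ge1$. In each of the following three hierarchies (defined in the context), the $j$-th flow $q_{t_j}=F_j[q,r]$, $r_{t_j}=G_j[q,r]$ admits the constraint $r=\epsilon\bar q$, in the sense that for every smooth $q:\mathbb{R}^2\to\mathbb{C}$, $$G_j[q,\epsilon\bar q]=\epsilon\,\overline{F_j[q,\epsilon\bar q]},$$ so the constraint is preserved by the flow and the system reduces to the single equation $q_{t_j}=F_j[q,\epsilon\bar q]$: (1) the Kaup–Newell hierarchy; (2) the type II hierarchy; (3) the $\mathcal{B}$-twisted hierarchy with parameter $\alpha$, where $\alpha$ is purely imaginary ($\mathrm{Re}\,\alpha=0$).
   Context: Let $a=\mathrm{diag}(i,-i)$. For smooth complex-valued functions $q(x,t)$, $r(x,t)$ set $u=\begin{pmatrix}0&q\\ r&0\end{pmatrix}$. Consider formal series $Q=\sum_{k\le 2}Q_k\lambda^k$ in a formal parameter $\lambda$, whose coefficients $Q_k$ are traceless $2\times2$ matrices of smooth functions of $(x,t)$, with $Q_k$ diagonal for $k$ even and off-diagonal for $k$ odd. For a diagonal traceless matrix function $P$ (possibly $0$), let $Q^{P}$ denote the unique such series with $Q_2=a$, $Q_1=u$, satisfying $[\partial_x+a\lambda^2+u\lambda+P,\;Q]=0$ (i.e. $\partial_xQ+[a\lambda^2+u\lambda+P,Q]=0$ coefficientwise) and $Q^2=-\lambda^4 I$; its coefficients are differential polynomials in $q,r$. (1) Kaup–Newell hierarchy: with $Q=Q^{0}$, the $j$-th flow is $u_{t_j}=\partial_xQ_{3-2j}$.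 (2) Type II hierarchy: with $P_0=\frac{i}{2}\mathrm{diag}(qr,-qr)$ and $Q=Q^{P_0}$, the $j$-th flow is $u_{t_j}=\partial_xQ_{3-2j}+[P_0,Q_{3-2j}]+[u,Q_{2-2j}]$. (3) $\mathcal{B}$-twisted hierarchy with parameter $\alpha\in\mathbb{C}$: with $P_0^{\alpha}=-\alpha\,\mathrm{diag}(qr,-qr)$ and $Q=Q^{P_0^\alpha}$, the $j$-th flow is $u_{t_j}=\partial_xQ_{3-2j}+[P_0^\alpha,Q_{3-2j}]+[u,Q_{2-2j}-\mathcal{B}(Q_{2-2j})]$, where $\mathcal{B}(A)=(1-2\alpha i)A$ for diagonal $A$ (so the last term equals $2\alpha i[u,Q_{2-2j}]$). In each case the right-hand side is off-diagonal, of the form $\begin{pmatrix}0&F_j[q,r]\\ G_j[q,r]&0\end{pmatrix}$ with $F_j,G_j$ differential polynomials in $q,r$, and the flow is the system $q_{t_j}=F_j[q,r]$, $r_{t_j}=G_j[q,r]$. (For $j=2$: (1) gives $q_t=\frac12(iq_{xx}+(q^2r)_x)$, $r_t=\frac12(-ir_{xx}+(qr^2)_x)$.) *)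

theory Defs
  imports "HOL-Analysis.Analysis"
begin

type_synonym cfun = "real \<times> real \<Rightarrow> complex"
type_synonym mfun = "real \<times> real \<Rightarrow> complex^2^2"

definition dx :: "cfun \<Rightarrow> cfun" where
  "dx f = (\<lambda>(x,t). vector_derivative (\<lambda>s. f (s,t)) (at x))"

definition dt :: "cfun \<Rightarrow> cfun" where
  "dt f = (\<lambda>(x,t). vector_derivative (\<lambda>s. f (x,s)) (at t))"

fun Ck :: "nat \<Rightarrow> cfun set" where
  "Ck 0 = {f. continuous_on UNIV f}"
| "Ck (Suc n) = {f. continuous_on UNIV f
      \<and> (\<forall>x t. (\<lambda>s. f (s,t)) differentiable (at x))
      \<and> (\<forall>x t. (\<lambda>s. f (x,s)) differentiable (at t))
      \<and> dx f \<in> Ck n \<and> dt f \<in> Ck n}"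

definition smooth :: "cfun \<Rightarrow> bool" where
  "smooth f \<longleftrightarrow> (\<forall>n. f \<in> Ck n)"

definition mat2 :: "complex \<Rightarrow> complex \<Rightarrow> complex \<Rightarrow> complex \<Rightarrow> complex^2^2" where
  "mat2 a b c d = (\<chi> i j. if i = 1 then (if j = 1 then a else b) else (if j = 1 then c else d))"

definition comm :: "complex^2^2 \<Rightarrow> complex^2^2 \<Rightarrow> complex^2^2" where
  "comm A B = A ** B - B ** A"

definition traceless :: "complex^2^2 \<Rightarrow> bool" where
  "traceless A \<longleftrightarrow> A$1$1 + A$2$2 = 0"

definition is_diag :: "complex^2^2 \<Rightarrow> bool" where
  "is_diag A \<longleftrightarrow> A$1$2 = 0 \<and> A$2$1 = 0"

definition is_offdiag :: "complex^2^2 \<Rightarrow> bool" where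
  "is_offdiag A \<longleftrightarrow> A$1$1 = 0 \<and> A$2$2 = 0"

definition dxM :: "mfun \<Rightarrow> mfun" where
  "dxM M = (\<lambda>p. \<chi> i j. dx (\<lambda>p'. M p' $ i $ j) p)"

definition amat :: "complex^2^2" where
  "amat = mat2 \<i> 0 0 (-\<i>)"

definition umat :: "cfun \<Rightarrow> cfun \<Rightarrow> mfun" where
  "umat q r = (\<lambda>p. mat2 0 (q p) (r p) 0)"

text \<open>A formal series Q = sum_{k<=2} Q_k lambda^k is represented by its coefficient
  family Q :: int => mfun, with Q k = 0 for k > 2.  The conditions:
  Q_2 = a, Q_1 = u, coefficients traceless, smooth, diagonal for even k and
  off-diagonal for odd k; the coefficient of lambda^n of
  d_x Q + [a lambda^2 + u lambda + P, Q] vanishes, i.e.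
  d_x Q_n + [a,Q_(n-2)] + [u,Q_(n-1)] + [P,Q_n] = 0 for all n;
  and Q^2 = -lambda^4 I, i.e. sum_(i+j=n) Q_i Q_j = -delta_(n,4) I.\<close>

definition is_Qseries :: "mfun \<Rightarrow> cfun \<Rightarrow> cfun \<Rightarrow> (int \<Rightarrow> mfun) \<Rightarrow> bool" where
  "is_Qseries P q r Q \<longleftrightarrow>
     (\<forall>k>2. Q k = (\<lambda>p. 0))
   \<and> Q 2 = (\<lambda>p. amat)
   \<and> Q 1 = umat q r
   \<and> (\<forall>k p. traceless (Q k p))
   \<and> (\<forall>k p. even k \<longrightarrow> is_diag (Q k p))
   \<and> (\<forall>k p. odd k \<longrightarrow> is_offdiag (Q k p))
   \<and> (\<forall>k i j. smooth (\<lambda>p. Q k p $ i $ j))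
   \<and> (\<forall>n p. dxM (Q n) p + comm amat (Q (n-2) p) + comm (umat q r p) (Q (n-1) p)
              + comm (P p) (Q n p) = 0)
   \<and> (\<forall>n p. (\<Sum>i\<in>{n-2..2}. Q i p ** Q (n-i) p) = (if n = 4 then - mat 1 else 0))"

definition Qser :: "mfun \<Rightarrow> cfun \<Rightarrow> cfun \<Rightarrow> int \<Rightarrow> mfun" where
  "Qser P q r = (THE Q. is_Qseries P q r Q)"

definition P0 :: "cfun \<Rightarrow> cfun \<Rightarrow> mfun" where
  "P0 q r = (\<lambda>p. mat2 (\<i>/2 * q p * r p) 0 0 (-(\<i>/2 * q p * r p)))"

definition P0a :: "complex \<Rightarrow> cfun \<Rightarrow> cfun \<Rightarrow> mfun" where
  "P0a \<alpha> q r = (\<lambda>p. mat2 (-\<alpha> * (q p * r p)) 0 0 (\<alpha> * (q p * r p)))"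

text \<open>The operator B (applied only to diagonal matrices): B(A) = (1 - 2 alpha i) A.\<close>
definition Bop :: "complex \<Rightarrow> complex^2^2 \<Rightarrow> complex^2^2" where
  "Bop \<alpha> A = (\<chi> i j. (1 - 2 * \<alpha> * \<i>) * A $ i $ j)"

definition KN_rhs :: "nat \<Rightarrow> cfun \<Rightarrow> cfun \<Rightarrow> mfun" where
  "KN_rhs j q r = (let Q = Qser (\<lambda>p. 0) q r in dxM (Q (3 - 2 * int j)))"

definition TII_rhs :: "nat \<Rightarrow> cfun \<Rightarrow> cfun \<Rightarrow> mfun" where
  "TII_rhs j q r = (let Q = Qser (P0 q r) q r in
     (\<lambda>p. dxM (Q (3 - 2 * int j)) p + comm (P0 q r p) (Q (3 - 2 * int j) p)
          + comm (umat q r p) (Q (2 - 2 * int j) p)))"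

definition Btw_rhs :: "complex \<Rightarrow> nat \<Rightarrow> cfun \<Rightarrow> cfun \<Rightarrow> mfun" where
  "Btw_rhs \<alpha> j q r = (let Q = Qser (P0a \<alpha> q r) q r in
     (\<lambda>p. dxM (Q (3 - 2 * int j)) p + comm (P0a \<alpha> q r p) (Q (3 - 2 * int j) p)
          + comm (umat q r p) (Q (2 - 2 * int j) p - Bop \<alpha> (Q (2 - 2 * int j) p))))"

definition Fflow :: "mfun \<Rightarrow> cfun" where "Fflow R = (\<lambda>p. R p $ 1 $ 2)"
definition Gflow :: "mfun \<Rightarrow> cfun" where "Gflow R = (\<lambda>p. R p $ 2 $ 1)"

end

theory Submission
  imports Defs "HOL-Computational_Algebra.Formal_Power_Series"
begin

text \<open>Write \<open>\<sigma>(A) = K \<bar>A\<bar> K\<^sup>-\<^sup>1\<close> with \<open>K = [[0, 1], [\<epsilon>, 0]]\<close> and \<open>\<bar>A\<bar>\<close> the entrywise conjugate.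
  Under \<open>r = \<epsilon> q\<^sup>*\<close> this antilinear ring automorphism fixes \<open>a\<close>, \<open>u\<close> and every \<open>P = diag(p, -p)\<close>
  with \<open>p\<close> purely imaginary (covering \<open>0\<close>, \<open>P\<^sub>0\<close> and \<open>P\<^sub>0\<^sup>\<alpha>\<close> for \<open>Re \<alpha> = 0\<close>), and it commutes with
  \<open>\<partial>\<^sub>x\<close>.  So \<open>\<sigma>(Q)\<close> satisfies all defining conditions of \<open>Q\<^sup>P\<close>; these determine the series
  uniquely, coefficient by coefficient downwards from \<open>Q\<^sub>2 = a\<close>, hence \<open>\<sigma>(Q) = Q\<close>.  Every flow is
  built from \<open>Q\<close>, \<open>P\<close> and \<open>u\<close> by \<open>\<partial>\<^sub>x\<close>, commutators and multiplication by the real number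
  \<open>2\<alpha>\<i>\<close>, so its right-hand side is \<open>\<sigma>\<close>-fixed, and the \<open>(2,1)\<close> entry of a \<open>\<sigma>\<close>-fixed matrix is
  \<open>\<epsilon>\<close> times the conjugate of its \<open>(1,2)\<close> entry.  Existence of \<open>Q\<^sup>P\<close> needs an explicit recursive
  construction; its only non-trivial identity, \<open>\<partial>\<^sub>x d = r b - q c\<close>, follows by differentiating
  \<open>d\<^sup>2 + b c = -1\<close>.\<close>

definition x_differentiable :: "cfun \<Rightarrow> bool" where
  "x_differentiable f \<longleftrightarrow> (\<forall>x t. (\<lambda>s. f (s,t)) differentiable (at x))"

definition t_differentiable :: "cfun \<Rightarrow> bool" where
  "t_differentiable f \<longleftrightarrow> (\<forall>x t. (\<lambda>s. f (x,s)) differentiable (at t))"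

lemma dx_has_vector_derivative:
  "x_differentiable f \<Longrightarrow> ((\<lambda>s. f (s,t)) has_vector_derivative dx f (x,t)) (at x)"
  unfolding x_differentiable_def dx_def by (simp add: vector_derivative_works[symmetric])

lemma dt_has_vector_derivative:
  "t_differentiable f \<Longrightarrow> ((\<lambda>s. f (x,s)) has_vector_derivative dt f (x,t)) (at t)"
  unfolding t_differentiable_def dt_def by (simp add: vector_derivative_works[symmetric])

lemma dx_eqI:
  assumes "\<And>x t. ((\<lambda>s. f (s,t)) has_vector_derivative D (x,t)) (at x)"
  shows "x_differentiable f" "dx f = D"
  using assms by (auto simp: x_differentiable_def dx_def vector_derivative_at intro: differentiableI_vector)

lemma dt_eqI:
  assumes "\<And>x t. ((\<lambda>s. f (x,s)) has_vector_derivative D (x,t)) (at t)"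
  shows "t_differentiable f" "dt f = D"
  using assms by (auto simp: t_differentiable_def dt_def vector_derivative_at intro: differentiableI_vector)

lemma dx_const: "x_differentiable (\<lambda>p. c)" "dx (\<lambda>p. c) = (\<lambda>p. 0)"
  by (auto intro!: dx_eqI[where D="\<lambda>p. 0"])

lemma dt_const: "t_differentiable (\<lambda>p. c)" "dt (\<lambda>p. c) = (\<lambda>p. 0)"
  by (auto intro!: dt_eqI[where D="\<lambda>p. 0"])

lemma dx_add:
  assumes "x_differentiable f" "x_differentiable g"
  shows "x_differentiable (\<lambda>p. f p + g p)" "dx (\<lambda>p. f p + g p) = (\<lambda>p. dx f p + dx g p)"
  by (auto intro!: dx_eqI has_vector_derivative_add dx_has_vector_derivative assms)

lemma dt_add:
  assumes "t_differentiable f" "t_differentiable g"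
  shows "t_differentiable (\<lambda>p. f p + g p)" "dt (\<lambda>p. f p + g p) = (\<lambda>p. dt f p + dt g p)"
  by (auto intro!: dt_eqI has_vector_derivative_add dt_has_vector_derivative assms)

lemma dx_mult:
  assumes "x_differentiable f" "x_differentiable g"
  shows "x_differentiable (\<lambda>p. f p * g p)" "dx (\<lambda>p. f p * g p) = (\<lambda>p. dx f p * g p + f p * dx g p)"
  by (auto intro!: dx_eqI has_vector_derivative_mult[THEN has_vector_derivative_eq_rhs]
      dx_has_vector_derivative assms simp: algebra_simps)

lemma dt_mult:
  assumes "t_differentiable f" "t_differentiable g"
  shows "t_differentiable (\<lambda>p. f p * g p)" "dt (\<lambda>p. f p * g p) = (\<lambda>p. dt f p * g p + f p * dt g p)"
  by (auto intro!: dt_eqI has_vector_derivative_mult[THEN has_vector_derivative_eq_rhs]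
      dt_has_vector_derivative assms simp: algebra_simps)

lemma dx_cnj:
  assumes "x_differentiable f"
  shows "x_differentiable (\<lambda>p. cnj (f p))" "dx (\<lambda>p. cnj (f p)) = (\<lambda>p. cnj (dx f p))"
  by (auto intro!: dx_eqI has_vector_derivative_cnj dx_has_vector_derivative assms)

lemma dt_cnj:
  assumes "t_differentiable f"
  shows "t_differentiable (\<lambda>p. cnj (f p))" "dt (\<lambda>p. cnj (f p)) = (\<lambda>p. cnj (dt f p))"
  by (auto intro!: dt_eqI has_vector_derivative_cnj dt_has_vector_derivative assms)

lemma dx_cmult: "x_differentiable f \<Longrightarrow> dx (\<lambda>p. c * f p) = (\<lambda>p. c * dx f p)"
  using dx_mult(2)[OF dx_const(1)] by (simp add: dx_const(2))

lemma dx_minus: "x_differentiable f \<Longrightarrow> dx (\<lambda>p. - f p) = (\<lambda>p. - dx f p)"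
  using dx_cmult[of f "-1"] by simp

lemma Ck_Suc_iff:
  "f \<in> Ck (Suc n) \<longleftrightarrow> continuous_on UNIV f \<and> x_differentiable f \<and> t_differentiable f
     \<and> dx f \<in> Ck n \<and> dt f \<in> Ck n"
  by (simp add: x_differentiable_def t_differentiable_def)

lemma Ck_const: "(\<lambda>p. c) \<in> Ck n"
  by (induction n arbitrary: c) (simp_all add: Ck_Suc_iff dx_const dt_const del: Ck.simps(2))

lemma Ck_add: "f \<in> Ck n \<Longrightarrow> g \<in> Ck n \<Longrightarrow> (\<lambda>p. f p + g p) \<in> Ck n"
proof (induction n arbitrary: f g)
  case (Suc n)
  then show ?case
    unfolding Ck_Suc_iff using dx_add[of f g] dt_add[of f g] by (auto intro: continuous_on_add)
qed (auto intro: continuous_on_add)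

lemma Ck_Suc_imp_Ck: "f \<in> Ck (Suc n) \<Longrightarrow> f \<in> Ck n"
proof (induction n arbitrary: f)
  case (Suc n)
  then show ?case unfolding Ck_Suc_iff[of _ "Suc n"] Ck_Suc_iff[of _ n] by blast
qed simp

lemma Ck_mult: "f \<in> Ck n \<Longrightarrow> g \<in> Ck n \<Longrightarrow> (\<lambda>p. f p * g p) \<in> Ck n"
proof (induction n arbitrary: f g)
  case (Suc n)
  then have "f \<in> Ck n" "g \<in> Ck n" using Ck_Suc_imp_Ck by blast+
  with Suc show ?case
    unfolding Ck_Suc_iff using dx_mult[of f g] dt_mult[of f g]
    by (auto intro!: continuous_on_mult Suc.IH Ck_add)
qed (auto intro: continuous_on_mult)

lemma Ck_cnj: "f \<in> Ck n \<Longrightarrow> (\<lambda>p. cnj (f p)) \<in> Ck n"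
proof (induction n arbitrary: f)
  case (Suc n)
  then show ?case
    unfolding Ck_Suc_iff using dx_cnj[of f] dt_cnj[of f] by (auto intro: continuous_on_cnj)
qed (auto intro: continuous_on_cnj)

lemma smooth_const: "smooth (\<lambda>p. c)"
  by (simp add: smooth_def Ck_const)

lemma smooth_add: "smooth f \<Longrightarrow> smooth g \<Longrightarrow> smooth (\<lambda>p. f p + g p)"
  by (simp add: smooth_def Ck_add)

lemma smooth_mult: "smooth f \<Longrightarrow> smooth g \<Longrightarrow> smooth (\<lambda>p. f p * g p)"
  by (simp add: smooth_def Ck_mult)

lemma smooth_cnj: "smooth f \<Longrightarrow> smooth (\<lambda>p. cnj (f p))"
  by (simp add: smooth_def Ck_cnj)

lemma smooth_cmult: "smooth f \<Longrightarrow> smooth (\<lambda>p. c * f p)"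
  by (rule smooth_mult[OF smooth_const])

lemma smooth_minus: "smooth f \<Longrightarrow> smooth (\<lambda>p. - f p)"
  using smooth_cmult[of f "-1"] by simp

lemma smooth_diff: "smooth f \<Longrightarrow> smooth g \<Longrightarrow> smooth (\<lambda>p. f p - g p)"
  using smooth_add[OF _ smooth_minus, of f g] by simp

lemma smooth_sum: "(\<And>i. i \<in> I \<Longrightarrow> smooth (f i)) \<Longrightarrow> smooth (\<lambda>p. \<Sum>i\<in>I. f i p)"
  by (induction I rule: infinite_finite_induct) (auto intro: smooth_add smooth_const)

lemma smooth_dx: "smooth f \<Longrightarrow> smooth (dx f)"
  unfolding smooth_def by (metis Ck_Suc_iff)

lemma smooth_imp_x_differentiable: "smooth f \<Longrightarrow> x_differentiable f"
  unfolding smooth_def by (metis Ck_Suc_iff)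

lemmas smooth_intros =
  smooth_const smooth_add smooth_mult smooth_cnj smooth_minus smooth_diff smooth_sum smooth_dx

lemma mat2_nth [simp]:
  "mat2 a b c d $ 1 $ 1 = a" "mat2 a b c d $ 1 $ 2 = b"
  "mat2 a b c d $ 2 $ 1 = c" "mat2 a b c d $ 2 $ 2 = d"
  by (simp_all add: mat2_def)

lemma mat2_eta: "mat2 (A$1$1) (A$1$2) (A$2$1) (A$2$2) = A"
  by (simp add: vec_eq_iff forall_2)

lemma mat2_eq_iff: "mat2 a b c d = mat2 a' b' c' d' \<longleftrightarrow> a = a' \<and> b = b' \<and> c = c' \<and> d = d'"
  by (metis mat2_nth)

lemma mat2_zero: "0 = mat2 0 0 0 0"
  by (subst mat2_eta[symmetric]) simp

lemma mat2_one: "mat 1 = mat2 1 0 0 1"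
  by (subst mat2_eta[symmetric]) (simp add: mat_def)

lemma mat2_add: "mat2 a b c d + mat2 a' b' c' d' = mat2 (a + a') (b + b') (c + c') (d + d')"
  by (subst mat2_eta[symmetric]) simp

lemma mat2_diff: "mat2 a b c d - mat2 a' b' c' d' = mat2 (a - a') (b - b') (c - c') (d - d')"
  by (subst mat2_eta[symmetric]) simp

lemma mat2_uminus: "- mat2 a b c d = mat2 (- a) (- b) (- c) (- d)"
  by (subst mat2_eta[symmetric]) simp

lemma mat2_mult:
  "mat2 a b c d ** mat2 a' b' c' d' = mat2 (a*a' + b*c') (a*b' + b*d') (c*a' + d*c') (c*b' + d*d')"
  by (subst mat2_eta[symmetric]) (simp add: matrix_matrix_mult_def sum_2)

lemma mat2_sum:
  "(\<Sum>i\<in>I. mat2 (a i) (b i) (c i) (d i)) = mat2 (\<Sum>i\<in>I. a i) (\<Sum>i\<in>I. b i) (\<Sum>i\<in>I. c i) (\<Sum>i\<in>I. d i)"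
  by (induction I rule: infinite_finite_induct) (simp_all add: mat2_zero mat2_add)

lemma comm_mat2:
  "comm (mat2 a b c d) (mat2 a' b' c' d') =
     mat2 (b*c' - b'*c) (a*b' + b*d' - a'*b - b'*d) (c*a' + d*c' - c'*a - d'*c) (c*b' - c'*b)"
  unfolding comm_def mat2_mult mat2_diff by (simp add: algebra_simps)

lemma dxM_mat2: "dxM (\<lambda>p. mat2 (a p) (b p) (c p) (d p)) p = mat2 (dx a p) (dx b p) (dx c p) (dx d p)"
  unfolding dxM_def by (subst mat2_eta[symmetric]) simp

lemma Bop_mat2: "Bop \<alpha> (mat2 a b c d) = mat2 (\<beta> * a) (\<beta> * b) (\<beta> * c) (\<beta> * d)"
  if "\<beta> = 1 - 2 * \<alpha> * \<i>"
  unfolding that by (subst mat2_eta[symmetric]) (simp add: Bop_def)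

text \<open>\<open>$\<close> stays reserved for the entries of matrices.\<close>
no_notation fps_nth (infixl "$" 75)
notation fps_nth (infixl "$$" 75)

lemma nat_0_1_Suc_Suc_cases [case_names 0 1 SucSuc]:
  obtains "n = 0" | "n = 1" | m where "n = Suc (Suc m)"
  by (metis One_nat_def not0_implies_Suc)

text \<open>Coefficient sequences indexed by \<open>m\<close> (the coefficient of \<open>\<lambda>\<^bsup>2-m\<^esup>\<close>) are handled as formal
  power series in \<open>\<lambda>\<^sup>-\<^sup>1\<close>, pointwise in \<open>(x, t)\<close>.\<close>
definition coef_fps :: "(nat \<Rightarrow> cfun) \<Rightarrow> real \<times> real \<Rightarrow> complex fps" where
  "coef_fps F x = Abs_fps (\<lambda>m. F m x)"

lemma coef_fps_nth [simp]: "coef_fps F x $$ m = F m x"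
  by (simp add: coef_fps_def)

lemma dx_coef_fps_mult_nth:
  assumes "\<And>m. x_differentiable (F m)" "\<And>m. x_differentiable (G m)"
  shows "x_differentiable (\<lambda>p. (coef_fps F p * coef_fps G p) $$ n)"
    "dx (\<lambda>p. (coef_fps F p * coef_fps G p) $$ n)
       = (\<lambda>p. (coef_fps (\<lambda>m. dx (F m)) p * coef_fps G p + coef_fps F p * coef_fps (\<lambda>m. dx (G m)) p) $$ n)"
proof -
  have "((\<lambda>s. F i (s,t) * G j (s,t)) has_vector_derivative
      dx (F i) (x,t) * G j (x,t) + F i (x,t) * dx (G j) (x,t)) (at x)" for i j x t
    using has_vector_derivative_mult[OF dx_has_vector_derivative dx_has_vector_derivative, OF assms]
    by (simp add: add.commute)
  then have "((\<lambda>s. \<Sum>i=0..n. F i (s,t) * G (n-i) (s,t)) has_vector_derivative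
      (\<Sum>i=0..n. dx (F i) (x,t) * G (n-i) (x,t) + F i (x,t) * dx (G (n-i)) (x,t))) (at x)" for x t
    by (intro has_vector_derivative_sum)
  then show "x_differentiable (\<lambda>p. (coef_fps F p * coef_fps G p) $$ n)"
    "dx (\<lambda>p. (coef_fps F p * coef_fps G p) $$ n)
       = (\<lambda>p. (coef_fps (\<lambda>m. dx (F m)) p * coef_fps G p + coef_fps F p * coef_fps (\<lambda>m. dx (G m)) p) $$ n)"
    by (auto intro!: dx_eqI simp: fps_mult_nth sum.distrib)
qed

definition lambda_coef :: "(nat \<Rightarrow> cfun) \<Rightarrow> int \<Rightarrow> cfun" where
  "lambda_coef F k p = (if k \<le> 2 then F (nat (2 - k)) p else 0)"

lemma lambda_coef_le_2 [simp]: "k \<le> 2 \<Longrightarrow> lambda_coef F k = F (nat (2 - k))"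
  by (simp add: lambda_coef_def fun_eq_iff)

lemma lambda_coef_gt_2 [simp]: "2 < k \<Longrightarrow> lambda_coef F k = (\<lambda>p. 0)"
  by (simp add: lambda_coef_def fun_eq_iff)

lemma nat_shift_le_2:
  "k \<le> 2 \<Longrightarrow> nat (3 - k) = Suc (nat (2 - k))" "k \<le> 2 \<Longrightarrow> nat (4 - k) = Suc (Suc (nat (2 - k)))"
  by arith+

lemma dx_lambda_coef: "dx (lambda_coef F k) = lambda_coef (\<lambda>m. dx (F m)) k"
  by (cases "k \<le> 2") (simp_all add: dx_const)

lemma smooth_lambda_coef: "(\<And>m. smooth (F m)) \<Longrightarrow> smooth (lambda_coef F k)"
  by (cases "k \<le> 2") (simp_all add: smooth_const)

lemma sum_lambda_coef_mult:
  "(\<Sum>i\<in>{n-2..2}. lambda_coef F i p * lambda_coef G (n - i) p)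
     = (if n \<le> 4 then (coef_fps F p * coef_fps G p) $$ nat (4 - n) else 0)"
proof (cases "n \<le> 4")
  case True
  have "(coef_fps F p * coef_fps G p) $$ nat (4 - n) = (\<Sum>k=0..nat (4 - n). F k p * G (nat (4 - n) - k) p)"
    by (simp add: fps_mult_nth)
  also have "\<dots> = (\<Sum>i\<in>{n-2..2}. lambda_coef F i p * lambda_coef G (n - i) p)"
  proof (rule sum.reindex_bij_witness[of _ "\<lambda>i. nat (2 - i)" "\<lambda>k. 2 - int k"])
    fix k assume "k \<in> {0..nat (4 - n)}"
    then have "nat (2 - (n - (2 - int k))) = nat (4 - n) - k" "n - (2 - int k) \<le> 2"
      using True by auto
    then show "lambda_coef F (2 - int k) p * lambda_coef G (n - (2 - int k)) p = F k p * G (nat (4 - n) - k) p"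
      by simp
  qed (use True in auto)
  finally show ?thesis
    using True by simp
qed simp

context
  fixes pp q r :: cfun
begin

text \<open>The entries of \<open>Q\<^sub>2\<^sub>-\<^sub>m = [[d\<^sub>m, b\<^sub>m], [c\<^sub>m, -d\<^sub>m]]\<close> for \<open>P = diag(pp, -pp)\<close>: \<open>b\<close> and \<open>c\<close> are
  solved from the off-diagonal entries of the Lax equation at \<open>\<lambda>\<^bsup>4-m\<^esup>\<close>, \<open>d\<close> from the diagonal
  of \<open>Q\<^sup>2 = -\<lambda>\<^sup>4\<close> at \<open>\<lambda>\<^bsup>4-m\<^esup>\<close>.\<close>
function (sequential) dcoef :: "nat \<Rightarrow> cfun" and bcoef :: "nat \<Rightarrow> cfun" and ccoef :: "nat \<Rightarrow> cfun"
where
  "dcoef 0 = (\<lambda>_. \<i>)"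
| "dcoef (Suc 0) = (\<lambda>_. 0)"
| "dcoef (Suc (Suc m)) = (\<lambda>x. \<i>/2 * (\<Sum>k\<in>{1..Suc m}.
      dcoef k x * dcoef (Suc (Suc m) - k) x + bcoef k x * ccoef (Suc (Suc m) - k) x))"
| "bcoef 0 = (\<lambda>_. 0)"
| "bcoef (Suc 0) = q"
| "bcoef (Suc (Suc m)) = (\<lambda>x. \<i>/2 * (dx (bcoef m) x - 2 * q x * dcoef (Suc m) x + 2 * pp x * bcoef m x))"
| "ccoef 0 = (\<lambda>_. 0)"
| "ccoef (Suc 0) = r"
| "ccoef (Suc (Suc m)) = (\<lambda>x. -\<i>/2 * (dx (ccoef m) x + 2 * r x * dcoef (Suc m) x - 2 * pp x * ccoef m x))"
  by pat_completeness auto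
termination by lexicographic_order

lemma coef_parity:
  "odd m \<Longrightarrow> dcoef m = (\<lambda>_. 0)" "even m \<Longrightarrow> bcoef m = (\<lambda>_. 0)" "even m \<Longrightarrow> ccoef m = (\<lambda>_. 0)"
proof (induction m and m and m rule: dcoef_bcoef_ccoef.induct)
  case (3 m)
  have "dcoef k x * dcoef (Suc (Suc m) - k) x + bcoef k x * ccoef (Suc (Suc m) - k) x = 0"
    if "k \<in> {1..Suc m}" for k x
    using that 3 by (cases "even k") auto
  then show ?case by simp
qed (simp_all add: dx_const)

lemma smooth_coef:
  assumes "smooth pp" "smooth q" "smooth r"
  shows "smooth (dcoef m)" "smooth (bcoef m)" "smooth (ccoef m)"
proof (induction m and m and m rule: dcoef_bcoef_ccoef.induct)
  case (3 m)
  then show ?case unfolding dcoef.simps by (intro smooth_intros) auto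
next
  case (6 m)
  then show ?case unfolding bcoef.simps by (intro smooth_intros assms)
next
  case (9 m)
  then show ?case unfolding ccoef.simps by (intro smooth_intros assms)
qed (simp_all add: assms smooth_const)

lemma dx_bcoef:
  "dx (bcoef m) x = -2*\<i> * bcoef (Suc (Suc m)) x + 2 * q x * dcoef (Suc m) x - 2 * pp x * bcoef m x"
  by (simp add: algebra_simps)

lemma dx_ccoef:
  "dx (ccoef m) x = 2*\<i> * ccoef (Suc (Suc m)) x - 2 * r x * dcoef (Suc m) x + 2 * pp x * ccoef m x"
  by (simp add: algebra_simps)

lemma coef_fps_square: "coef_fps dcoef x * coef_fps dcoef x + coef_fps bcoef x * coef_fps ccoef x = -1"
proof (rule fps_ext)
  fix n
  show "(coef_fps dcoef x * coef_fps dcoef x + coef_fps bcoef x * coef_fps ccoef x) $$ n = (-1) $$ n"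
  proof (cases n rule: nat_0_1_Suc_Suc_cases)
    case (SucSuc m)
    have "(coef_fps dcoef x * coef_fps dcoef x + coef_fps bcoef x * coef_fps ccoef x) $$ n
        = (\<Sum>i=0..n. dcoef i x * dcoef (n-i) x + bcoef i x * ccoef (n-i) x)"
      by (simp add: fps_mult_nth sum.distrib)
    also have "\<dots> = 2 * \<i> * dcoef n x + (\<Sum>i=1..Suc m. dcoef i x * dcoef (n-i) x + bcoef i x * ccoef (n-i) x)"
      unfolding SucSuc sum.atLeast0_atMost_Suc sum.atLeast_Suc_atMost[OF le0]
      by (simp add: algebra_simps del: dcoef.simps(3))
    also have "\<dots> = 0"
    proof -
      have cancel: "2 * \<i> * (\<i>/2 * S) + S = 0" for S :: complex
        by (simp add: field_simps)
      show ?thesis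
        unfolding SucSuc dcoef.simps(3) by (simp only: cancel)
    qed
    finally show ?thesis using SucSuc by simp
  qed (simp_all add: fps_mult_nth)
qed

lemma fps_dx_bcoef:
  "fps_X\<^sup>2 * coef_fps (\<lambda>m. dx (bcoef m)) x
     = fps_const (- 2 * \<i>) * coef_fps bcoef x + fps_const (2 * q x) * (fps_X * coef_fps dcoef x)
       - fps_const (2 * pp x) * (fps_X\<^sup>2 * coef_fps bcoef x)"
proof (rule fps_ext)
  fix n
  show "(fps_X\<^sup>2 * coef_fps (\<lambda>m. dx (bcoef m)) x) $$ n
     = (fps_const (- 2 * \<i>) * coef_fps bcoef x + fps_const (2 * q x) * (fps_X * coef_fps dcoef x)
       - fps_const (2 * pp x) * (fps_X\<^sup>2 * coef_fps bcoef x)) $$ n"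
    by (cases n rule: nat_0_1_Suc_Suc_cases)
      (simp_all add: fps_X_power_mult_nth dx_bcoef algebra_simps del: bcoef.simps(3))
qed

lemma fps_dx_ccoef:
  "fps_X\<^sup>2 * coef_fps (\<lambda>m. dx (ccoef m)) x
     = fps_const (2 * \<i>) * coef_fps ccoef x - fps_const (2 * r x) * (fps_X * coef_fps dcoef x)
       + fps_const (2 * pp x) * (fps_X\<^sup>2 * coef_fps ccoef x)"
proof (rule fps_ext)
  fix n
  show "(fps_X\<^sup>2 * coef_fps (\<lambda>m. dx (ccoef m)) x) $$ n
     = (fps_const (2 * \<i>) * coef_fps ccoef x - fps_const (2 * r x) * (fps_X * coef_fps dcoef x)
       + fps_const (2 * pp x) * (fps_X\<^sup>2 * coef_fps ccoef x)) $$ n"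
    by (cases n rule: nat_0_1_Suc_Suc_cases)
      (simp_all add: fps_X_power_mult_nth dx_ccoef algebra_simps del: ccoef.simps(3))
qed

definition Qcoef :: "int \<Rightarrow> mfun" where
  "Qcoef k p = mat2 (lambda_coef dcoef k p) (lambda_coef bcoef k p) (lambda_coef ccoef k p) (- lambda_coef dcoef k p)"

lemma lambda_coef_parity:
  "odd k \<Longrightarrow> lambda_coef dcoef k p = 0" "even k \<Longrightarrow> lambda_coef bcoef k p = 0"
  "even k \<Longrightarrow> lambda_coef ccoef k p = 0"
  by (auto simp: lambda_coef_def even_nat_iff coef_parity)

lemma Qcoef_square: "(\<Sum>i\<in>{n-2..2}. Qcoef i p ** Qcoef (n - i) p) = (if n = 4 then - mat 1 else 0)"
proof -
  define L where "L F G = (\<Sum>i\<in>{n-2..2}. lambda_coef F i p * lambda_coef G (n - i) p)" for F G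
  define e :: complex where "e = (if n = 4 then -1 else 0)"
  have L_fps: "L F G = (if n \<le> 4 then (coef_fps F p * coef_fps G p) $$ nat (4 - n) else 0)" for F G
    unfolding L_def by (rule sum_lambda_coef_mult)
  have "L dcoef dcoef + L bcoef ccoef = (if n \<le> 4 then (-1 :: complex fps) $$ nat (4 - n) else 0)"
    unfolding L_fps by (simp flip: fps_add_nth add: coef_fps_square)
  then have diag: "L dcoef dcoef + L bcoef ccoef = e"
    by (simp add: e_def)
  have "(\<Sum>i\<in>{n-2..2}. Qcoef i p ** Qcoef (n - i) p)
      = mat2 (L dcoef dcoef + L bcoef ccoef) (L dcoef bcoef - L bcoef dcoef)
             (L ccoef dcoef - L dcoef ccoef) (L ccoef bcoef + L dcoef dcoef)"
    unfolding Qcoef_def mat2_mult mat2_sum L_def by (simp add: sum.distrib sum_subtractf)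
  also have "\<dots> = mat2 e 0 0 e"
  proof -
    have "L F G = L G F" for F G
      by (simp add: L_fps mult.commute)
    then show ?thesis
      using diag by (metis add.commute diff_self)
  qed
  finally show ?thesis
    by (simp add: e_def mat2_one mat2_uminus mat2_zero)
qed

context
  assumes smooth: "smooth pp" "smooth q" "smooth r"
begin

lemma x_differentiable_coef:
  "x_differentiable (dcoef m)" "x_differentiable (bcoef m)" "x_differentiable (ccoef m)"
  using smooth_coef[OF smooth] by (auto intro: smooth_imp_x_differentiable)

lemma fps_dx_square:
  "coef_fps (\<lambda>m. dx (dcoef m)) x * coef_fps dcoef x + coef_fps dcoef x * coef_fps (\<lambda>m. dx (dcoef m)) x
   + (coef_fps (\<lambda>m. dx (bcoef m)) x * coef_fps ccoef x + coef_fps bcoef x * coef_fps (\<lambda>m. dx (ccoef m)) x)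
   = 0"
proof (rule fps_ext)
  fix n
  note dd = dx_coef_fps_mult_nth[of dcoef dcoef n, OF x_differentiable_coef(1) x_differentiable_coef(1)]
  note bc = dx_coef_fps_mult_nth[of bcoef ccoef n, OF x_differentiable_coef(2) x_differentiable_coef(3)]
  have "(\<lambda>p. (coef_fps dcoef p * coef_fps dcoef p) $$ n + (coef_fps bcoef p * coef_fps ccoef p) $$ n)
      = (\<lambda>p. (-1) $$ n)"
    using coef_fps_square by (metis fps_add_nth)
  then have "dx (\<lambda>p. (coef_fps dcoef p * coef_fps dcoef p) $$ n + (coef_fps bcoef p * coef_fps ccoef p) $$ n) x = 0"
    by (simp add: dx_const)
  then show "(coef_fps (\<lambda>m. dx (dcoef m)) x * coef_fps dcoef x + coef_fps dcoef x * coef_fps (\<lambda>m. dx (dcoef m)) x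
   + (coef_fps (\<lambda>m. dx (bcoef m)) x * coef_fps ccoef x + coef_fps bcoef x * coef_fps (\<lambda>m. dx (ccoef m)) x)) $$ n
   = 0 $$ n"
    by (simp add: dx_add[OF dd(1) bc(1)] dd(2) bc(2))
qed

text \<open>Multiplying the derivative of \<open>D\<^sup>2 + B C = -1\<close> by \<open>X\<^sup>2\<close> and inserting the
  recursions for \<open>B\<close> and \<open>C\<close>, the terms with \<open>B C\<close> cancel and what remains is divisible by
  \<open>2 X D\<close>, which is a non-zero divisor since \<open>D\<close> has constant term \<open>\<i>\<close>.\<close>
lemma fps_dx_dcoef:
  "fps_X * coef_fps (\<lambda>m. dx (dcoef m)) x + fps_const (q x) * coef_fps ccoef x
     - fps_const (r x) * coef_fps bcoef x = 0"
proof -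
  define D B C where "D = coef_fps dcoef x" and "B = coef_fps bcoef x" and "C = coef_fps ccoef x"
  define D' B' C' where "D' = coef_fps (\<lambda>m. dx (dcoef m)) x" and "B' = coef_fps (\<lambda>m. dx (bcoef m)) x"
    and "C' = coef_fps (\<lambda>m. dx (ccoef m)) x"
  have "0 = fps_X\<^sup>2 * (D' * D + D * D' + (B' * C + B * C'))"
    using fps_dx_square by (simp add: D_def B_def C_def D'_def B'_def C'_def)
  also have "\<dots> = 2 * fps_X * D * (fps_X * D') + (fps_X\<^sup>2 * B') * C + B * (fps_X\<^sup>2 * C')"
    by (simp add: algebra_simps power2_eq_square)
  also have "\<dots> = 2 * fps_X * D * (fps_X * D' + fps_const (q x) * C - fps_const (r x) * B)"
  proof -
    have two: "fps_const (2 * c) = 2 * fps_const c" "fps_const (- 2 * c) = - 2 * fps_const c" for c :: complex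
      by (simp_all add: fps_numeral_fps_const)
    show ?thesis
      unfolding B'_def C'_def fps_dx_bcoef fps_dx_ccoef two
      by (simp add: D_def B_def C_def algebra_simps power2_eq_square)
  qed
  finally have "2 * fps_X * D * (fps_X * D' + fps_const (q x) * C - fps_const (r x) * B) = 0" ..
  moreover have "D $$ 0 \<noteq> 0"
    by (simp add: D_def)
  then have "D \<noteq> 0"
    by auto
  ultimately show ?thesis
    by (simp add: D_def B_def C_def D'_def)
qed

lemma dx_dcoef: "dx (dcoef m) x = r x * bcoef (Suc m) x - q x * ccoef (Suc m) x"
  using arg_cong[OF fps_dx_dcoef, of "\<lambda>f. f $$ Suc m"] by (simp add: algebra_simps)

lemma dx_lambda_coef_dcoef:
  "dx (lambda_coef dcoef k) p = r p * lambda_coef bcoef (k - 1) p - q p * lambda_coef ccoef (k - 1) p"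
proof -
  consider "k \<le> 2" | "k = 3" | "k \<ge> 4" by linarith
  then show ?thesis
    by cases (simp_all add: dx_lambda_coef nat_shift_le_2 dx_const dx_dcoef)
qed

lemma dx_lambda_coef_bcoef:
  "dx (lambda_coef bcoef k) p = - 2 * \<i> * lambda_coef bcoef (k - 2) p
     + 2 * q p * lambda_coef dcoef (k - 1) p - 2 * pp p * lambda_coef bcoef k p"
proof -
  consider "k \<le> 2" | "k = 3" | "k = 4" | "k \<ge> 5" by linarith
  then show ?thesis
    by cases (simp_all add: dx_lambda_coef nat_shift_le_2 dx_const dx_bcoef del: bcoef.simps(3))
qed

lemma dx_lambda_coef_ccoef:
  "dx (lambda_coef ccoef k) p = 2 * \<i> * lambda_coef ccoef (k - 2) p
     - 2 * r p * lambda_coef dcoef (k - 1) p + 2 * pp p * lambda_coef ccoef k p"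
proof -
  consider "k \<le> 2" | "k = 3" | "k = 4" | "k \<ge> 5" by linarith
  then show ?thesis
    by cases (simp_all add: dx_lambda_coef nat_shift_le_2 dx_const dx_ccoef del: ccoef.simps(3))
qed

lemma Qcoef_lax:
  "dxM (Qcoef k) p + comm amat (Qcoef (k - 2) p) + comm (umat q r p) (Qcoef (k - 1) p)
     + comm (mat2 (pp p) 0 0 (- pp p)) (Qcoef k p) = 0"
proof -
  have dx_neg: "dx (\<lambda>p. - lambda_coef dcoef k p) = (\<lambda>p. - dx (lambda_coef dcoef k) p)"
    by (intro dx_minus smooth_imp_x_differentiable smooth_lambda_coef smooth_coef smooth)
  show ?thesis
    unfolding Qcoef_def dxM_mat2 dx_neg amat_def umat_def comm_mat2 mat2_add mat2_zero mat2_eq_iff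
    by (simp add: dx_lambda_coef_dcoef dx_lambda_coef_bcoef dx_lambda_coef_ccoef algebra_simps)
qed

lemma Qcoef_is_Qseries: "is_Qseries (\<lambda>p. mat2 (pp p) 0 0 (- pp p)) q r Qcoef"
  unfolding is_Qseries_def
proof (intro conjI allI impI)
  fix k :: int and i j :: 2
  show "smooth (\<lambda>p. Qcoef k p $ i $ j)"
    using exhaust_2[of i] exhaust_2[of j]
    by (auto simp: Qcoef_def intro!: smooth_minus smooth_lambda_coef smooth_coef smooth)
next
  fix k :: int
  assume "2 < k"
  then show "Qcoef k = (\<lambda>p. 0)"
    by (simp add: fun_eq_iff Qcoef_def mat2_zero)
next
  fix n :: int and p
  show "dxM (Qcoef n) p + comm amat (Qcoef (n - 2) p) + comm (umat q r p) (Qcoef (n - 1) p)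
      + comm (mat2 (pp p) 0 0 (- pp p)) (Qcoef n p) = 0"
    by (rule Qcoef_lax)
  show "(\<Sum>i\<in>{n-2..2}. Qcoef i p ** Qcoef (n - i) p) = (if n = 4 then - mat 1 else 0)"
    by (rule Qcoef_square)
qed (simp_all add: fun_eq_iff Qcoef_def amat_def umat_def traceless_def is_diag_def is_offdiag_def
    lambda_coef_parity del: dcoef.simps(3) bcoef.simps(3) ccoef.simps(3))

end

end

lemma comm_amat: "comm amat A = mat2 0 (2 * \<i> * A$1$2) (- 2 * \<i> * A$2$1) 0"
  using comm_mat2[of \<i> 0 0 "- \<i>" "A$1$1" "A$1$2" "A$2$1" "A$2$2"] by (simp add: amat_def mat2_eta mult.assoc)

lemma anticomm_amat: "A ** amat + amat ** A = mat2 (2 * \<i> * A$1$1) 0 0 (- 2 * \<i> * A$2$2)"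
  using mat2_mult[of "A$1$1" "A$1$2" "A$2$1" "A$2$2" \<i> 0 0 "- \<i>"]
    mat2_mult[of \<i> 0 0 "- \<i>" "A$1$1" "A$1$2" "A$2$1" "A$2$2"]
  by (simp add: amat_def mat2_eta mat2_add mult.assoc)

lemma offdiag_eqI:
  assumes "is_offdiag A" "is_offdiag B" "comm amat A = comm amat B"
  shows "A = B"
proof -
  have "A$1$2 = B$1$2" "A$2$1 = B$2$1"
    using assms(3) by (simp_all add: comm_amat mat2_eq_iff)
  with assms(1,2) show ?thesis
    by (metis is_offdiag_def mat2_eta)
qed

lemma diag_eqI:
  assumes "is_diag A" "is_diag B" "A ** amat + amat ** A = B ** amat + amat ** B"
  shows "A = B"
proof -
  have "A$1$1 = B$1$1" "A$2$2 = B$2$2"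
    using assms(3) by (simp_all add: anticomm_amat mat2_eq_iff)
  with assms(1,2) show ?thesis
    by (metis is_diag_def mat2_eta)
qed

lemma is_QseriesD:
  assumes "is_Qseries P q r Q"
  shows "2 < k \<Longrightarrow> Q k = (\<lambda>p. 0)" "Q 2 = (\<lambda>p. amat)" "Q 1 = umat q r"
    "traceless (Q k p)" "smooth (\<lambda>p. Q k p $ i $ j)" "odd k \<Longrightarrow> is_offdiag (Q k p)" "even k \<Longrightarrow> is_diag (Q k p)"
    "dxM (Q n) p + comm amat (Q (n - 2) p) + comm (umat q r p) (Q (n - 1) p) + comm (P p) (Q n p) = 0"
    "(\<Sum>i\<in>{n-2..2}. Q i p ** Q (n - i) p) = (if n = 4 then - mat 1 else 0)"
  using assms unfolding is_Qseries_def by blast+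

lemma Qseries_odd_coeff_eq:
  assumes Q: "is_Qseries P q r Q" and Q': "is_Qseries P q r Q'" and "odd k"
    and "Q (k + 1) = Q' (k + 1)" "Q (k + 2) = Q' (k + 2)"
  shows "Q k = Q' k"
proof
  fix p
  have idx: "k + 2 - 2 = k" "k + 2 - 1 = k + 1"
    by simp_all
  have "dxM (Q (k + 2)) p + comm amat (Q k p) + comm (umat q r p) (Q (k + 1) p) + comm (P p) (Q (k + 2) p)
      = dxM (Q (k + 2)) p + comm amat (Q' k p) + comm (umat q r p) (Q (k + 1) p) + comm (P p) (Q (k + 2) p)"
    using is_QseriesD(8)[OF Q, of "k + 2" p] is_QseriesD(8)[OF Q', of "k + 2" p] assms(4,5)
    unfolding idx by simp
  then have "comm amat (Q k p) = comm amat (Q' k p)"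
    by simp
  then show "Q k p = Q' k p"
    by (rule offdiag_eqI[OF is_QseriesD(6)[OF Q \<open>odd k\<close>] is_QseriesD(6)[OF Q' \<open>odd k\<close>]])
qed

lemma Qseries_even_coeff_eq:
  assumes Q: "is_Qseries P q r Q" and Q': "is_Qseries P q r Q'" and "even k" "k \<le> 0"
    and higher: "\<And>j. k < j \<Longrightarrow> Q j = Q' j"
  shows "Q k = Q' k"
proof
  fix p
  have sum_split: "(\<Sum>i\<in>{k..2}. f i) = f k + f 2 + (\<Sum>i\<in>{k+1..1}. f i)" for f :: "int \<Rightarrow> complex^2^2"
  proof -
    have "{k..2} = insert k (insert 2 {k+1..1})" "k \<notin> insert 2 {k+1..1}" "2 \<notin> {k+1..1}"
      using \<open>k \<le> 0\<close> by auto
    then show ?thesis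
      by (simp add: add.assoc)
  qed
  define S where "S = (\<Sum>i\<in>{k+1..1}. Q i p ** Q (k + 2 - i) p)"
  have "S = (\<Sum>i\<in>{k+1..1}. Q' i p ** Q' (k + 2 - i) p)"
    unfolding S_def using higher by (intro sum.cong) auto
  then have "Q k p ** amat + amat ** Q k p + S = 0" "Q' k p ** amat + amat ** Q' k p + S = 0"
    using is_QseriesD(9)[OF Q, where n = "k + 2" and p = p] is_QseriesD(9)[OF Q', where n = "k + 2" and p = p]
      \<open>k \<le> 0\<close>
    by (simp_all add: S_def sum_split is_QseriesD(2)[OF Q] is_QseriesD(2)[OF Q'])
  then have "Q k p ** amat + amat ** Q k p = Q' k p ** amat + amat ** Q' k p"
    by (metis add_right_imp_eq)
  then show "Q k p = Q' k p"
    by (rule diag_eqI[OF is_QseriesD(7)[OF Q \<open>even k\<close>] is_QseriesD(7)[OF Q' \<open>even k\<close>]])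
qed

text \<open>The coefficients are determined downwards from \<open>Q\<^sub>2 = a\<close>: an odd \<open>Q\<^sub>k\<close> through \<open>[a, Q\<^sub>k]\<close> by the
  Lax equation at \<open>\<lambda>\<^bsup>k+2\<^esup>\<close>, an even one through \<open>Q\<^sub>k a + a Q\<^sub>k\<close> by \<open>Q\<^sup>2 = -\<lambda>\<^sup>4\<close> at \<open>\<lambda>\<^bsup>k+2\<^esup>\<close>.\<close>
lemma Qseries_unique:
  assumes Q: "is_Qseries P q r Q" and Q': "is_Qseries P q r Q'"
  shows "Q = Q'"
proof
  fix k
  show "Q k = Q' k"
  proof (induction "nat (2 - k)" arbitrary: k rule: less_induct)
    case less
    have higher: "Q j = Q' j" if "k < j" "k < 2" for j
    proof (cases "j \<le> 2")
      case True
      with that have "nat (2 - j) < nat (2 - k)"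
        by simp
      then show ?thesis
        by (rule less)
    qed (simp add: is_QseriesD(1)[OF Q] is_QseriesD(1)[OF Q'])
    consider "2 < k" | "k = 2" | "k = 1" | "odd k" "k < 1" | "even k" "k \<le> 0"
      by (cases "even k"; cases "k \<le> 0"; cases "k = 1"; cases "k = 2") auto
    then show ?case
    proof cases
      case 4
      then show ?thesis
        using Qseries_odd_coeff_eq[OF Q Q' 4(1)] higher[of "k + 1"] higher[of "k + 2"] by simp
    next
      case 5
      then show ?thesis
        using Qseries_even_coeff_eq[OF Q Q' 5] higher by simp
    qed (simp_all add: is_QseriesD(1-3)[OF Q] is_QseriesD(1-3)[OF Q'])
  qed
qed

lemma Qser_is_Qseries:
  assumes "smooth pp" "smooth q" "smooth r"
  shows "is_Qseries (\<lambda>p. mat2 (pp p) 0 0 (- pp p)) q r (Qser (\<lambda>p. mat2 (pp p) 0 0 (- pp p)) q r)"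
proof -
  have "\<exists>!Q. is_Qseries (\<lambda>p. mat2 (pp p) 0 0 (- pp p)) q r Q"
    using Qcoef_is_Qseries[OF assms] Qseries_unique by blast
  then show ?thesis
    unfolding Qser_def by (rule theI')
qed

text \<open>The map \<open>\<sigma>(A) = K \<bar>A\<bar> K\<^sup>-\<^sup>1\<close>, \<open>K = [[0, 1], [\<epsilon>, 0]]\<close>, written out entrywise.\<close>
definition reduction :: "complex \<Rightarrow> complex^2^2 \<Rightarrow> complex^2^2" where
  "reduction \<epsilon> A = mat2 (cnj (A$2$2)) (\<epsilon> * cnj (A$2$1)) (\<epsilon> * cnj (A$1$2)) (cnj (A$1$1))"

lemma reduction_mat2 [simp]: "reduction \<epsilon> (mat2 a b c d) = mat2 (cnj d) (\<epsilon> * cnj c) (\<epsilon> * cnj b) (cnj a)"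
  by (simp add: reduction_def)

lemma reduction_fixed_entry: "reduction \<epsilon> A = A \<Longrightarrow> A$2$1 = \<epsilon> * cnj (A$1$2)"
  by (metis reduction_def mat2_nth(3))

lemma reduction_zero [simp]: "reduction \<epsilon> 0 = 0"
  by (simp add: mat2_zero)

lemma reduction_uminus: "reduction \<epsilon> (- A) = - reduction \<epsilon> A"
  by (simp add: reduction_def mat2_uminus)

lemma reduction_mat_1: "reduction \<epsilon> (mat 1) = mat 1"
  by (simp add: mat2_one)

lemma reduction_amat: "reduction \<epsilon> amat = amat"
  by (simp add: amat_def)

lemma reduction_add: "reduction \<epsilon> (A + B) = reduction \<epsilon> A + reduction \<epsilon> B"
  by (simp add: reduction_def mat2_add distrib_left)

lemma reduction_diff: "reduction \<epsilon> (A - B) = reduction \<epsilon> A - reduction \<epsilon> B"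
  by (simp add: reduction_def mat2_diff algebra_simps)

lemma reduction_sum: "reduction \<epsilon> (\<Sum>i\<in>I. f i) = (\<Sum>i\<in>I. reduction \<epsilon> (f i))"
  by (induction I rule: infinite_finite_induct) (simp_all add: reduction_add)

lemma reduction_mult:
  assumes "\<epsilon> * \<epsilon> = 1"
  shows "reduction \<epsilon> (A ** B) = reduction \<epsilon> A ** reduction \<epsilon> B"
proof -
  obtain a b c d a' b' c' d' where "A = mat2 a b c d" "B = mat2 a' b' c' d'"
    by (metis mat2_eta)
  moreover have "\<epsilon> * (\<epsilon> * z) = z" for z
    using assms by (simp add: mult.assoc[symmetric])
  ultimately show ?thesis
    by (simp add: mat2_mult mat2_eq_iff algebra_simps)
qed

lemma reduction_comm: "\<epsilon> * \<epsilon> = 1 \<Longrightarrow> reduction \<epsilon> (comm A B) = comm (reduction \<epsilon> A) (reduction \<epsilon> B)"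
  by (simp add: comm_def reduction_diff reduction_mult)

lemma reduction_Bop:
  assumes "cnj \<alpha> = - \<alpha>"
  shows "reduction \<epsilon> (Bop \<alpha> A) = Bop \<alpha> (reduction \<epsilon> A)"
proof -
  obtain a b c d where "A = mat2 a b c d"
    by (metis mat2_eta)
  with assms show ?thesis
    by (simp add: Bop_mat2[OF refl] mat2_eq_iff algebra_simps)
qed

lemma reduction_umat: "\<epsilon> * cnj \<epsilon> = 1 \<Longrightarrow> reduction \<epsilon> (umat q (\<lambda>p. \<epsilon> * cnj (q p)) p) = umat q (\<lambda>p. \<epsilon> * cnj (q p)) p"
  by (simp add: umat_def mult.assoc[symmetric])

lemma dxM_reduction:
  assumes "\<And>i j. x_differentiable (\<lambda>p. M p $ i $ j)"
  shows "dxM (\<lambda>p. reduction \<epsilon> (M p)) p = reduction \<epsilon> (dxM M p)"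
  unfolding reduction_def dxM_mat2
  by (simp add: dxM_def dx_cmult dx_cnj dx_cmult[OF dx_cnj(1)] assms)

lemma is_Qseries_reduction:
  assumes Q: "is_Qseries P q r Q" and \<epsilon>: "\<epsilon> * \<epsilon> = 1"
    and P: "\<And>p. reduction \<epsilon> (P p) = P p" and u: "\<And>p. reduction \<epsilon> (umat q r p) = umat q r p"
  shows "is_Qseries P q r (\<lambda>k p. reduction \<epsilon> (Q k p))"
  unfolding is_Qseries_def
proof (intro conjI allI impI)
  fix k :: int and p
  show "traceless (reduction \<epsilon> (Q k p))"
    using is_QseriesD(4)[OF Q, of k p] by (simp add: traceless_def reduction_def add.commute flip: complex_cnj_add)
  show "even k \<Longrightarrow> is_diag (reduction \<epsilon> (Q k p))"
    using is_QseriesD(7)[OF Q] by (simp add: is_diag_def reduction_def)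
  show "odd k \<Longrightarrow> is_offdiag (reduction \<epsilon> (Q k p))"
    using is_QseriesD(6)[OF Q] by (simp add: is_offdiag_def reduction_def)
next
  fix k :: int and i j :: 2
  show "smooth (\<lambda>p. reduction \<epsilon> (Q k p) $ i $ j)"
    using exhaust_2[of i] exhaust_2[of j] is_QseriesD(5)[OF Q]
    by (auto simp: reduction_def intro!: smooth_cmult smooth_cnj)
next
  fix n :: int and p
  have "dxM (\<lambda>p. reduction \<epsilon> (Q n p)) p = reduction \<epsilon> (dxM (Q n) p)"
    by (intro dxM_reduction smooth_imp_x_differentiable is_QseriesD(5)[OF Q])
  then have "dxM (\<lambda>p. reduction \<epsilon> (Q n p)) p + comm amat (reduction \<epsilon> (Q (n - 2) p))
      + comm (umat q r p) (reduction \<epsilon> (Q (n - 1) p)) + comm (P p) (reduction \<epsilon> (Q n p))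
    = reduction \<epsilon> (dxM (Q n) p + comm amat (Q (n - 2) p) + comm (umat q r p) (Q (n - 1) p)
      + comm (P p) (Q n p))"
    by (simp add: reduction_add reduction_comm[OF \<epsilon>] reduction_amat P u)
  then show "dxM (\<lambda>p. reduction \<epsilon> (Q n p)) p + comm amat (reduction \<epsilon> (Q (n - 2) p))
      + comm (umat q r p) (reduction \<epsilon> (Q (n - 1) p)) + comm (P p) (reduction \<epsilon> (Q n p)) = 0"
    by (simp add: is_QseriesD(8)[OF Q])
  have "(\<Sum>i\<in>{n-2..2}. reduction \<epsilon> (Q i p) ** reduction \<epsilon> (Q (n - i) p))
      = reduction \<epsilon> (\<Sum>i\<in>{n-2..2}. Q i p ** Q (n - i) p)"
    by (simp add: reduction_sum reduction_mult[OF \<epsilon>])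
  then show "(\<Sum>i\<in>{n-2..2}. reduction \<epsilon> (Q i p) ** reduction \<epsilon> (Q (n - i) p))
      = (if n = 4 then - mat 1 else 0)"
    by (simp add: is_QseriesD(9)[OF Q] reduction_uminus reduction_mat_1)
qed (simp_all add: is_QseriesD(1-3)[OF Q] reduction_amat fun_eq_iff u)

lemma Qser_reduction_fixed:
  fixes \<epsilon> :: complex
  assumes "\<epsilon> = 1 \<or> \<epsilon> = -1" and "smooth q" "smooth pp" and "\<And>p. cnj (pp p) = - pp p"
  defines "Q \<equiv> Qser (\<lambda>p. mat2 (pp p) 0 0 (- pp p)) q (\<lambda>p. \<epsilon> * cnj (q p))"
  shows "reduction \<epsilon> (Q k p) = Q k p" "reduction \<epsilon> (dxM (Q k) p) = dxM (Q k) p"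
proof -
  have \<epsilon>: "\<epsilon> * \<epsilon> = 1" "\<epsilon> * cnj \<epsilon> = 1"
    using assms(1) by auto
  have Q: "is_Qseries (\<lambda>p. mat2 (pp p) 0 0 (- pp p)) q (\<lambda>p. \<epsilon> * cnj (q p)) Q"
    unfolding Q_def using assms(2,3) by (intro Qser_is_Qseries smooth_cmult smooth_cnj)
  have "(\<lambda>k p. reduction \<epsilon> (Q k p)) = Q"
    using is_Qseries_reduction[OF Q \<epsilon>(1)] assms(4) reduction_umat[OF \<epsilon>(2)]
    by (intro Qseries_unique[OF _ Q]) simp
  then have fixed: "reduction \<epsilon> (Q k p) = Q k p" for k p
    by metis
  then show "reduction \<epsilon> (Q k p) = Q k p" .
  have "dxM (Q k) p = dxM (\<lambda>p. reduction \<epsilon> (Q k p)) p"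
    by (simp only: fixed)
  also have "\<dots> = reduction \<epsilon> (dxM (Q k) p)"
    by (intro dxM_reduction smooth_imp_x_differentiable is_QseriesD(5)[OF Q])
  finally show "reduction \<epsilon> (dxM (Q k) p) = dxM (Q k) p" ..
qed

lemma flow_reduction_fixed:
  fixes \<epsilon> :: complex and T :: "complex^2^2 \<Rightarrow> complex^2^2"
  assumes "\<epsilon> = 1 \<or> \<epsilon> = -1" and "smooth q" "smooth pp" and "\<And>p. cnj (pp p) = - pp p"
    and T: "\<And>A. reduction \<epsilon> (T A) = T (reduction \<epsilon> A)"
    and r: "r = (\<lambda>p. \<epsilon> * cnj (q p))" and P: "P = (\<lambda>p. mat2 (pp p) 0 0 (- pp p))"
  shows "reduction \<epsilon> (dxM (Qser P q r k) p + comm (P p) (Qser P q r k p) + comm (umat q r p) (T (Qser P q r k' p)))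
       = dxM (Qser P q r k) p + comm (P p) (Qser P q r k p) + comm (umat q r p) (T (Qser P q r k' p))"
proof -
  have "\<epsilon> * \<epsilon> = 1" "\<epsilon> * cnj \<epsilon> = 1"
    using assms(1) by auto
  then show ?thesis
    using Qser_reduction_fixed[OF assms(1-4)] assms(4)
    by (simp add: reduction_add reduction_comm T reduction_umat P r)
qed

theorem theorem4p1:
  fixes \<epsilon> :: complex and j :: nat and q :: "real \<times> real \<Rightarrow> complex"
  assumes "\<epsilon> = 1 \<or> \<epsilon> = -1" and "j \<ge> 1" and "smooth q"
  defines "r \<equiv> (\<lambda>p. \<epsilon> * cnj (q p))"
  shows "(\<forall>p. Gflow (KN_rhs j q r) p = \<epsilon> * cnj (Fflow (KN_rhs j q r) p))
       \<and> (\<forall>p. Gflow (TII_rhs j q r) p = \<epsilon> * cnj (Fflow (TII_rhs j q r) p))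
       \<and> (\<forall>\<alpha>::complex. Re \<alpha> = 0 \<longrightarrow>
            (\<forall>p. Gflow (Btw_rhs \<alpha> j q r) p = \<epsilon> * cnj (Fflow (Btw_rhs \<alpha> j q r) p)))"
proof -
  have flow: "Gflow R p = \<epsilon> * cnj (Fflow R p)" if "\<And>p. reduction \<epsilon> (R p) = R p" for R p
    unfolding Gflow_def Fflow_def using that by (rule reduction_fixed_entry)
  note fixed = flow_reduction_fixed[OF assms(1,3) _ _ _ r_def[THEN meta_eq_to_obj_eq]]
  have smooth_qr: "smooth (\<lambda>p. c * (q p * r p))" for c
    unfolding r_def by (intro smooth_mult smooth_cmult smooth_cnj assms(3))
  have imaginary_qr: "cnj (c * (q p * r p)) = - (c * (q p * r p))" if "cnj c = - c" for c p
    using assms(1) that by (auto simp: r_def)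
  have "reduction \<epsilon> (KN_rhs j q r p) = KN_rhs j q r p" for p
    using fixed[of "\<lambda>_. 0" "\<lambda>_. 0" "\<lambda>_. 0"]
    by (simp add: KN_rhs_def Let_def comm_def smooth_const flip: mat2_zero)
  moreover have "reduction \<epsilon> (TII_rhs j q r p) = TII_rhs j q r p" for p
    unfolding TII_rhs_def Let_def
    by (rule fixed[of "\<lambda>p. \<i>/2 * (q p * r p)" "\<lambda>A. A"], rule smooth_qr, rule imaginary_qr)
      (simp_all add: P0_def fun_eq_iff mult.assoc)
  moreover have "reduction \<epsilon> (Btw_rhs \<alpha> j q r p) = Btw_rhs \<alpha> j q r p" if "Re \<alpha> = 0" for \<alpha> p
  proof -
    have \<alpha>: "cnj \<alpha> = - \<alpha>"
      using that by (simp add: complex_eq_iff)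
    show ?thesis
      unfolding Btw_rhs_def Let_def
      by (rule fixed[of "\<lambda>p. - \<alpha> * (q p * r p)" "\<lambda>A. A - Bop \<alpha> A"], rule smooth_qr, rule imaginary_qr)
        (simp_all add: \<alpha> P0a_def fun_eq_iff reduction_diff reduction_Bop)
  qed
  ultimately show ?thesis
    using flow by blast
qed

end
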